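(* Let $P$ be a finite poset and $\mathcal{J}\subseteq\mathrm{Hom}(P,\mathbb{N})$ a poset ideal with complement filter $\mathcal{J}^c$. The set of monomials in $L^p(\mathcal{J},P)$ is precisely $\{\overline{\Lambda}\phi:\phi\in\mathcal{J}^c\}$. Equivalently, the monomials of $k[x_P]$ not in $L^p(\mathcal{J},P)$ are precisely the $\overline{\Lambda}\phi$ for $\phi\in\mathcal{J}$.
   Context: $\mathbb{N}=\{0,1,\dots\}$; $\mathrm{Hom}(P,\mathbb{N})$ is the set of isotone maps $P\to\mathbb{N}$ ordered pointwise. The ascent is $\Lambda\phi=\{(p,i)\in P\times\mathbb{N}:\phi(q)\le i<\phi(p)\ \forall q<p\}$ and $\overline{\Lambda}\phi=\prod_{(p,i)\in\Lambda\phi}x_p\in k[x_P]$, $k$ a field. The letterplace ideal $L(\mathcal{J},P)\subseteq k[x_{P\times\mathbb{N}}]$ is generated by the monomials $\prod_{(p,i)\in\Lambda\phi}x_{p,i}$ for $\phi\in\mathcal{J}^c$, and $L^p(\mathcal{J},P)$ is the ideal of $k[x_P]$ generated by the images of these generators under $x_{p,i}\mapsto x_p$. *)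

theory Defs
  imports Main "HOL-Library.Poly_Mapping"
begin

type_synonym ('v, 'k) mpoly = "('v \<Rightarrow>\<^sub>0 nat) \<Rightarrow>\<^sub>0 'k"

definition Var :: "'v \<Rightarrow> ('v, 'k::comm_semiring_1) mpoly" where
  "Var v = Poly_Mapping.single (Poly_Mapping.single v 1) 1"

definition is_monomial :: "('v, 'k::comm_semiring_1) mpoly \<Rightarrow> bool" where
  "is_monomial f \<longleftrightarrow> (\<exists>e. f = Poly_Mapping.single e 1)"

definition ideal_gen :: "'a::comm_ring_1 set \<Rightarrow> 'a set" where
  "ideal_gen G = {f. \<exists>F c. finite F \<and> F \<subseteq> G \<and> f = (\<Sum>g\<in>F. c g * g)}"

definition Hom :: "('p::order \<Rightarrow> nat) set" where
  "Hom = {\<phi>. mono \<phi>}"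

definition poset_ideal :: "('p::order \<Rightarrow> nat) set \<Rightarrow> bool" where
  "poset_ideal J \<longleftrightarrow> J \<subseteq> Hom \<and> (\<forall>\<phi>\<in>J. \<forall>\<psi>\<in>Hom. \<psi> \<le> \<phi> \<longrightarrow> \<psi> \<in> J)"

definition ascent :: "('p::order \<Rightarrow> nat) \<Rightarrow> ('p \<times> nat) set" where
  "ascent \<phi> = {(p, i). (\<forall>q. q < p \<longrightarrow> \<phi> q \<le> i) \<and> i < \<phi> p}"

definition ascent_bar :: "('p::order \<Rightarrow> nat) \<Rightarrow> ('p, 'k::comm_ring_1) mpoly" where
  "ascent_bar \<phi> = (\<Prod>(p, i)\<in>ascent \<phi>. Var p)"

(* L^p(J,P): generated by the images of the letterplace generators prod_{(p,i) in ascent phi} x_{p,i}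
   (phi in J^c) under the ring map x_{p,i} |-> x_p, i.e. by prod_{(p,i) in ascent phi} x_p. *)
definition Lp :: "('p::order \<Rightarrow> nat) set \<Rightarrow> ('p, 'k::comm_ring_1) mpoly set" where
  "Lp J = ideal_gen {(\<Prod>(p, i)\<in>ascent \<phi>. Var p) | \<phi>. \<phi> \<in> Hom - J}"

end

theory Submission
  imports Defs
begin

text \<open>
  The factor of \<open>ascent_bar \<phi>\<close> at \<open>p\<close> is \<open>x\<^sub>p\<close> raised to \<open>\<phi> p - max {\<phi> q | q < p}\<close>, and
  \<open>\<phi>\<close> is recovered from these exponents by recursion along the order. Hence the
  \<open>ascent_bar \<phi>\<close>, \<open>\<phi> \<in> Hom\<close>, are exactly the monomials, and divisibility of
  \<open>ascent_bar \<phi>\<close> by \<open>ascent_bar \<psi>\<close> forces \<open>\<psi> \<le> \<phi>\<close>. A monomial lies in an ideal generated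
  by monomials only if one of the generators divides it, so \<open>ascent_bar \<phi> \<in> L\<^sup>p(J,P)\<close>
  would give some \<open>\<psi> \<notin> J\<close> below \<open>\<phi>\<close>; this is impossible when \<open>\<phi> \<in> J\<close>, as \<open>J\<close> is
  down-closed.
\<close>

lemma monomial_in_ideal_gen_monomials_imp_dvd:
  fixes e :: "'m::comm_monoid_add"
  assumes "Poly_Mapping.single e (1::'k::comm_ring_1) \<in> ideal_gen ((\<lambda>d. Poly_Mapping.single d 1) ` D)"
  shows "\<exists>d\<in>D. \<exists>a. e = a + d"
proof (rule ccontr)
  assume no_divisor: "\<not> ?thesis"
  obtain F c where F: "finite F" "F \<subseteq> (\<lambda>d. Poly_Mapping.single d 1) ` D"
    and e_eq: "Poly_Mapping.single e (1::'k) = (\<Sum>g\<in>F. c g * g)"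
    using assms unfolding ideal_gen_def by blast
  have "Poly_Mapping.lookup (c g * g) e = 0" if "g \<in> F" for g
  proof -
    obtain d where "d \<in> D" and g: "g = Poly_Mapping.single d 1"
      using F(2) \<open>g \<in> F\<close> by blast
    have "e \<notin> Poly_Mapping.keys (c g * g)"
      using keys_mult[of "c g" g] no_divisor \<open>d \<in> D\<close> by (auto simp: g)
    then show ?thesis
      by (simp add: in_keys_iff)
  qed
  then have "Poly_Mapping.lookup (\<Sum>g\<in>F. c g * g) e = 0"
    by (simp add: lookup_sum)
  then show False
    unfolding e_eq[symmetric] by simp
qed

lemma prod_single_one:
  "finite A \<Longrightarrow> (\<Prod>x\<in>A. Poly_Mapping.single (g x) (1::'k::comm_semiring_1)) =
     Poly_Mapping.single (\<Sum>x\<in>A. g x) 1"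
  by (induction A rule: finite_induct) (auto simp: mult_single)

definition sup_below :: "('p::{finite, order} \<Rightarrow> nat) \<Rightarrow> 'p \<Rightarrow> nat" where
  "sup_below \<phi> p = Max (insert 0 (\<phi> ` {q. q < p}))"

definition ascent_exponent :: "('p::{finite, order} \<Rightarrow> nat) \<Rightarrow> 'p \<Rightarrow>\<^sub>0 nat" where
  "ascent_exponent \<phi> = (\<Sum>(p, i)\<in>ascent \<phi>. Poly_Mapping.single p 1)"

lemma sup_below_le_iff: "sup_below \<phi> p \<le> i \<longleftrightarrow> (\<forall>q. q < p \<longrightarrow> \<phi> q \<le> i)"
  unfolding sup_below_def by auto

lemma le_sup_below: "q < p \<Longrightarrow> \<phi> q \<le> sup_below \<phi> p"
  using sup_below_le_iff by blast

lemma sup_below_le: "mono \<phi> \<Longrightarrow> sup_below \<phi> p \<le> \<phi> p"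
  unfolding sup_below_le_iff by (auto simp: mono_def)

lemma mem_ascent_iff: "(p, i) \<in> ascent \<phi> \<longleftrightarrow> sup_below \<phi> p \<le> i \<and> i < \<phi> p"
  unfolding ascent_def sup_below_le_iff by auto

lemma finite_ascent: "finite (ascent (\<phi> :: 'p::{finite, order} \<Rightarrow> nat))"
proof (rule finite_subset)
  show "ascent \<phi> \<subseteq> (\<Union>p. {p} \<times> {..<\<phi> p})"
    unfolding ascent_def by auto
qed auto

lemma lookup_ascent_exponent: "Poly_Mapping.lookup (ascent_exponent \<phi>) p = \<phi> p - sup_below \<phi> p"
proof -
  have "Poly_Mapping.lookup (ascent_exponent \<phi>) p = (\<Sum>x\<in>ascent \<phi>. if fst x = p then 1 else 0)"
    unfolding ascent_exponent_def lookup_sum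
    by (rule sum.cong) (auto simp: lookup_single when_def)
  also have "\<dots> = card {x\<in>ascent \<phi>. fst x = p}"
    using finite_ascent[of \<phi>] by (simp add: sum.inter_filter[symmetric])
  also have "{x\<in>ascent \<phi>. fst x = p} = Pair p ` {sup_below \<phi> p..<\<phi> p}"
    by (auto simp: mem_ascent_iff)
  also have "card \<dots> = \<phi> p - sup_below \<phi> p"
    by (simp add: card_image inj_on_def)
  finally show ?thesis .
qed

lemma ascent_bar_eq_single:
  "(ascent_bar \<phi> :: ('p::{finite, order}, 'k::comm_ring_1) mpoly) =
     Poly_Mapping.single (ascent_exponent \<phi>) 1"
proof -
  have "(ascent_bar \<phi> :: ('p, 'k) mpoly) =
      (\<Prod>x\<in>ascent \<phi>. Poly_Mapping.single ((\<lambda>(p, i). Poly_Mapping.single p 1) x) 1)"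
    unfolding ascent_bar_def by (rule prod.cong) (auto simp: Var_def)
  also have "\<dots> = Poly_Mapping.single (ascent_exponent \<phi>) 1"
    unfolding ascent_exponent_def by (rule prod_single_one[OF finite_ascent])
  finally show ?thesis .
qed

lemma wf_less_finite: "wf {(q, p). q < (p :: 'p::{finite, order})}"
proof (rule wf_subset[OF wf_measure[of "\<lambda>p. card {q. q < p}"]])
  show "{(q, p). q < p} \<subseteq> measure (\<lambda>p. card {q. q < (p :: 'p)})"
    by (auto intro!: psubset_card_mono dest: order.strict_trans)
qed

lemma le_if_ascent_exponent_le:
  assumes "mono \<psi>" "mono \<phi>"
    and "\<And>p. Poly_Mapping.lookup (ascent_exponent \<psi>) p \<le> Poly_Mapping.lookup (ascent_exponent \<phi>) p"
  shows "\<psi> \<le> (\<phi> :: 'p::{finite, order} \<Rightarrow> nat)"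
proof (rule le_funI)
  fix p
  show "\<psi> p \<le> \<phi> p"
  proof (induction p rule: wf_induct_rule[OF wf_less_finite])
    case (1 p)
    have "sup_below \<psi> p \<le> sup_below \<phi> p"
      unfolding sup_below_le_iff using 1 le_sup_below order.trans by blast
    moreover have "\<psi> p - sup_below \<psi> p \<le> \<phi> p - sup_below \<phi> p"
      using assms(3)[of p] by (simp add: lookup_ascent_exponent)
    ultimately show ?case
      using sup_below_le[OF assms(1), of p] sup_below_le[OF assms(2), of p] by linarith
  qed
qed

lemma ex_Hom_ascent_exponent_eq:
  fixes e :: "'p::{finite, order} \<Rightarrow>\<^sub>0 nat"
  shows "\<exists>\<phi>\<in>Hom. ascent_exponent \<phi> = e"
proof
  define \<phi> where "\<phi> = wfrec {(q, p). q < p}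
    (\<lambda>g p. Poly_Mapping.lookup e p + Max (insert 0 (g ` {q. q < p})))"
  have rec: "\<phi> p = Poly_Mapping.lookup e p + sup_below \<phi> p" for p
  proof -
    have "cut \<phi> {(q, p). q < p} p ` {q. q < p} = \<phi> ` {q. q < p}"
      by (rule image_cong) (auto simp: cut_apply)
    then show ?thesis
      unfolding \<phi>_def by (subst wfrec[OF wf_less_finite]) (simp add: sup_below_def)
  qed
  have "mono \<phi>"
  proof (rule monoI)
    fix q p :: 'p
    assume "q \<le> p"
    then show "\<phi> q \<le> \<phi> p"
      using le_sup_below[of q p \<phi>] rec[of p] by (metis order.order_iff_strict trans_le_add2)
  qed
  then show "\<phi> \<in> Hom"
    by (simp add: Hom_def)
  show "ascent_exponent \<phi> = e"
    by (rule poly_mapping_eqI) (metis lookup_ascent_exponent rec diff_add_inverse2)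
qed

lemma is_monomial_iff_ascent_bar:
  "is_monomial (f :: ('p::{finite, order}, 'k::comm_ring_1) mpoly) \<longleftrightarrow> (\<exists>\<phi>\<in>Hom. f = ascent_bar \<phi>)"
  unfolding is_monomial_def ascent_bar_eq_single
  using ex_Hom_ascent_exponent_eq by metis

lemma Lp_eq_ideal_gen_monomials:
  "(Lp J :: ('p::{finite, order}, 'k::comm_ring_1) mpoly set) =
     ideal_gen ((\<lambda>d. Poly_Mapping.single d 1) ` ascent_exponent ` (Hom - J))"
proof -
  have "{(\<Prod>(p, i)\<in>ascent \<phi>. Var p) | \<phi>. \<phi> \<in> Hom - J} =
      ((\<lambda>d. Poly_Mapping.single d 1) ` ascent_exponent ` (Hom - J) :: ('p, 'k) mpoly set)"
    unfolding ascent_bar_eq_single[unfolded ascent_bar_def] by blast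
  then show ?thesis
    unfolding Lp_def by simp
qed

lemma ascent_bar_in_Lp_iff:
  assumes "poset_ideal J" "\<phi> \<in> Hom"
  shows "(ascent_bar \<phi> :: ('p::{finite, order}, 'k::comm_ring_1) mpoly) \<in> Lp J \<longleftrightarrow> \<phi> \<notin> J"
proof
  assume "\<phi> \<notin> J"
  then have "ascent_bar \<phi> \<in> {(\<Prod>(p, i)\<in>ascent \<phi>. Var p) :: ('p, 'k) mpoly | \<phi>. \<phi> \<in> Hom - J}"
    using assms(2) unfolding ascent_bar_def by blast
  then show "(ascent_bar \<phi> :: ('p, 'k) mpoly) \<in> Lp J"
    unfolding Lp_def ideal_gen_def
    by (intro CollectI exI[of _ "{ascent_bar \<phi>}"] exI[of _ "\<lambda>_. 1"]) simp
next
  assume "(ascent_bar \<phi> :: ('p, 'k) mpoly) \<in> Lp J"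
  then obtain \<psi> a where \<psi>: "\<psi> \<in> Hom - J" and dvd: "ascent_exponent \<phi> = a + ascent_exponent \<psi>"
    using monomial_in_ideal_gen_monomials_imp_dvd[where 'k='k]
    unfolding Lp_eq_ideal_gen_monomials ascent_bar_eq_single by blast
  have "\<psi> \<le> \<phi>"
    using \<psi> assms(2) dvd by (intro le_if_ascent_exponent_le) (auto simp: Hom_def lookup_add)
  then show "\<phi> \<notin> J"
    using assms(1) \<psi> unfolding poset_ideal_def by blast
qed

theorem corollary3p6:
  fixes J :: "('p::{finite, order} \<Rightarrow> nat) set"
  assumes "poset_ideal J"
  shows "{f :: ('p, 'k::field) mpoly. is_monomial f \<and> f \<in> Lp J} = {ascent_bar \<phi> | \<phi>. \<phi> \<in> Hom - J} \<and>
         {f :: ('p, 'k::field) mpoly. is_monomial f \<and> f \<notin> Lp J} = {ascent_bar \<phi> | \<phi>. \<phi> \<in> J}"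
proof -
  have "J \<subseteq> Hom"
    using assms unfolding poset_ideal_def by blast
  then have "{f :: ('p, 'k) mpoly. is_monomial f \<and> (f \<in> Lp J \<longleftrightarrow> b)} =
      {ascent_bar \<phi> | \<phi>. \<phi> \<in> Hom \<and> (\<phi> \<notin> J \<longleftrightarrow> b)}" for b
    using ascent_bar_in_Lp_iff[OF assms, where 'k='k] is_monomial_iff_ascent_bar[where 'k='k]
    by fastforce
  from this[of True] this[of False] \<open>J \<subseteq> Hom\<close> show ?thesis
    by auto
qed

end
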